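(* Let $F\colon\mathsf{Ring}\to\mathsf{Set}$ be a contravariant functor whose restriction to the full subcategory $\mathsf{CommRing}$ of commutative rings is isomorphic to $\operatorname{Spec}$. If $R$ is any ring admitting a ring homomorphism $\mathbb{C}\to R$, then $F(\mathrm{M}_n(R))=\varnothing$ for every $n\geq 3$.
   Context: Rings are unital and ring homomorphisms preserve the identity. $\operatorname{Spec}$ is the contravariant functor on commutative rings sending a ring to its set of prime ideals and a homomorphism $f$ to $P\mapsto f^{-1}(P)$. $\mathrm{M}_n(R)$ is the ring of $n\times n$ matrices over $R$. *)

theory Defs
  imports Complex_Main "HOL-Algebra.Algebra"
begin

definition complex_ring :: "complex ring" where
  "complex_ring = \<lparr> carrier = UNIV, monoid.mult = (*), monoid.one = 1,
                    ring.zero = 0, ring.add = (+) \<rparr>"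

definition mat_ring :: "nat \<Rightarrow> ('a, 'm) ring_scheme \<Rightarrow> (nat \<Rightarrow> nat \<Rightarrow> 'a) ring" where
  "mat_ring n R = \<lparr>
     carrier = {M. (\<forall>i j. i < n \<and> j < n \<longrightarrow> M i j \<in> carrier R) \<and>
                   (\<forall>i j. \<not> (i < n \<and> j < n) \<longrightarrow> M i j = \<zero>\<^bsub>R\<^esub>)},
     monoid.mult = (\<lambda>M N i j. if i < n \<and> j < n
                      then (\<Oplus>\<^bsub>R\<^esub> k\<in>{..<n}. M i k \<otimes>\<^bsub>R\<^esub> N k j) else \<zero>\<^bsub>R\<^esub>),
     monoid.one = (\<lambda>i j. if i < n \<and> j = i then \<one>\<^bsub>R\<^esub> else \<zero>\<^bsub>R\<^esub>),
     ring.zero = (\<lambda>i j. \<zero>\<^bsub>R\<^esub>),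
     ring.add = (\<lambda>M N i j. if i < n \<and> j < n then M i j \<oplus>\<^bsub>R\<^esub> N i j else \<zero>\<^bsub>R\<^esub>) \<rparr>"

definition Spec :: "('a, 'm) ring_scheme \<Rightarrow> 'a set set" where
  "Spec A = {P. primeideal P A}"

definition Spec_map :: "('a, 'm) ring_scheme \<Rightarrow> ('a \<Rightarrow> 'b) \<Rightarrow> 'b set \<Rightarrow> 'a set" where
  "Spec_map A f P = f -` P \<inter> carrier A"

text \<open>A contravariant functor from the category of (unital) rings whose
  carriers live in the universe type 'u to Set: object part F, morphism part
  Fm A B f : F B -> F A for f a ring homomorphism A -> B. Morphisms are
  functions on carriers, hence the extensionality condition.\<close>
definition contra_ring_functor ::
  "('u ring \<Rightarrow> 'x set) \<Rightarrow> ('u ring \<Rightarrow> 'u ring \<Rightarrow> ('u \<Rightarrow> 'u) \<Rightarrow> 'x \<Rightarrow> 'x) \<Rightarrow> bool" where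
  "contra_ring_functor F Fm \<longleftrightarrow>
     (\<forall>A B f. ring A \<and> ring B \<and> f \<in> ring_hom A B \<longrightarrow> Fm A B f \<in> F B \<rightarrow> F A) \<and>
     (\<forall>A B f g. ring A \<and> ring B \<and> f \<in> ring_hom A B \<and> (\<forall>x\<in>carrier A. f x = g x)
         \<longrightarrow> (\<forall>y\<in>F B. Fm A B f y = Fm A B g y)) \<and>
     (\<forall>A. ring A \<longrightarrow> (\<forall>y\<in>F A. Fm A A id y = y)) \<and>
     (\<forall>A B C f g. ring A \<and> ring B \<and> ring C \<and> f \<in> ring_hom A B \<and> g \<in> ring_hom B C
         \<longrightarrow> (\<forall>z\<in>F C. Fm A C (g \<circ> f) z = Fm A B f (Fm B C g z)))"

definition restricts_to_Spec ::
  "('u ring \<Rightarrow> 'x set) \<Rightarrow> ('u ring \<Rightarrow> 'u ring \<Rightarrow> ('u \<Rightarrow> 'u) \<Rightarrow> 'x \<Rightarrow> 'x) \<Rightarrow> bool" where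
  "restricts_to_Spec F Fm \<longleftrightarrow>
     (\<exists>\<eta>. (\<forall>A. cring A \<longrightarrow> bij_betw (\<eta> A) (F A) (Spec A)) \<and>
          (\<forall>A B f. cring A \<and> cring B \<and> f \<in> ring_hom A B
              \<longrightarrow> (\<forall>y\<in>F B. \<eta> A (Fm A B f y) = Spec_map A f (\<eta> B y))))"

end

theory Submission
  imports Defs
begin

text \<open>A point of \<open>F(A)\<close> gives, for every commutative subring \<open>C\<close> of \<open>A\<close>, a prime of \<open>C\<close>
  (restrict along \<open>C \<rightarrow> A\<close> and use \<open>F \<cong> Spec\<close> on \<open>C\<close>), and these primes are compatible
  with inclusions; their union is therefore a prime partial ideal \<open>P\<close> of \<open>A\<close>: it meets every
  commutative subring in a prime ideal. Pull \<open>P\<close> back along \<open>M\<^sub>n(\<complex>) \<rightarrow> M\<^sub>n(R) \<cong> A\<close>. Since the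
  diagonal units sum to 1, some \<open>E\<^sub>k\<^sub>k\<close> lies outside \<open>P\<close>, hence so does the diagonal projection
  onto any three coordinates containing \<open>k\<close>. Among the rank-one projections onto lines of that
  copy of \<open>\<complex>\<^sup>3\<close>, of two orthogonal ones at least one lies in \<open>P\<close> (their product is 0), and the
  three of an orthogonal basis cannot all lie in \<open>P\<close> (their sum does not). Such a colouring of
  lines is impossible by the Kochen--Specker theorem, witnessed here by 33 integer rays.\<close>

section \<open>Prime partial ideals\<close>

definition centralizer :: "('a, 'm) ring_scheme \<Rightarrow> 'a \<Rightarrow> 'a set" where
  "centralizer R c = {a \<in> carrier R. a \<otimes>\<^bsub>R\<^esub> c = c \<otimes>\<^bsub>R\<^esub> a}"

lemma (in ring) centralizer_subring:
  assumes "c \<in> carrier R"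
  shows "subring (centralizer R c) R"
proof (rule subringI)
  show "centralizer R c \<subseteq> carrier R" by (auto simp: centralizer_def)
  show "\<one> \<in> centralizer R c" using assms by (auto simp: centralizer_def)
  fix a b assume a: "a \<in> centralizer R c" and b: "b \<in> centralizer R c"
  show "\<ominus> a \<in> centralizer R c" using a assms by (auto simp: centralizer_def l_minus r_minus)
  show "a \<otimes> b \<in> centralizer R c" using a b assms by (auto simp: centralizer_def) (metis m_assoc)
  show "a \<oplus> b \<in> centralizer R c" using a b assms by (auto simp: centralizer_def l_distr r_distr)
qed

lemma (in ring) generate_ring_subcring:
  assumes H: "H \<subseteq> carrier R" and comm: "\<And>a b. a \<in> H \<Longrightarrow> b \<in> H \<Longrightarrow> a \<otimes> b = b \<otimes> a"
  shows "subcring (generate_ring R H) R"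
proof (rule subcringI)
  show "subring (generate_ring R H) R" using H by (rule generate_ring_is_subring)
  have gen_centralizer: "generate_ring R H \<subseteq> centralizer R c"
    if "c \<in> carrier R" "H \<subseteq> centralizer R c" for c
    using that H by (intro generate_ring_min_subring1 centralizer_subring)
  fix a b assume a: "a \<in> generate_ring R H" and b: "b \<in> generate_ring R H"
  have aR: "a \<in> carrier R" using a H generate_ring_in_carrier by blast
  \<comment> \<open>Double centralizer: each generator commutes with all of the generated ring, hence so does a.\<close>
  have "H \<subseteq> centralizer R a"
  proof
    fix c assume c: "c \<in> H"
    have "a \<in> centralizer R c"
      using gen_centralizer[of c] a c H comm by (auto simp: centralizer_def)
    then show "c \<in> centralizer R a" using c H by (auto simp: centralizer_def)
  qed
  then show "a \<otimes> b = b \<otimes> a" using gen_centralizer[OF aR] b by (auto simp: centralizer_def)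
qed

definition prime_partial_ideal :: "('a, 'm) ring_scheme \<Rightarrow> 'a set \<Rightarrow> bool" where
  "prime_partial_ideal R P \<longleftrightarrow> (\<forall>C. subcring C R \<longrightarrow> primeideal (P \<inter> C) (R\<lparr>carrier := C\<rparr>))"

lemma (in ring) prime_partial_ideal_commuting_pair:
  assumes "prime_partial_ideal R P" and e: "e \<in> carrier R" and f: "f \<in> carrier R"
    and "e \<otimes> f = f \<otimes> e"
  obtains C where "e \<in> C" "f \<in> C" "C \<subseteq> carrier R" "primeideal (P \<inter> C) (R\<lparr>carrier := C\<rparr>)"
proof
  let ?C = "generate_ring R {e, f}"
  have "subcring ?C R"
    using assms by (intro generate_ring_subcring) auto
  then show "primeideal (P \<inter> ?C) (R\<lparr>carrier := ?C\<rparr>)"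
    using assms(1) unfolding prime_partial_ideal_def by blast
  show "e \<in> ?C" "f \<in> ?C" by (auto intro: generate_ring.incl)
  show "?C \<subseteq> carrier R" using e f by (intro generate_ring_incl) auto
qed

lemma (in ring) one_notin_prime_partial_ideal:
  assumes "prime_partial_ideal R P"
  shows "\<one> \<notin> P"
proof
  assume one: "\<one> \<in> P"
  obtain C where C: "\<one> \<in> C" and prime: "primeideal (P \<inter> C) (R\<lparr>carrier := C\<rparr>)"
    using prime_partial_ideal_commuting_pair[OF assms one_closed one_closed] by auto
  interpret C: primeideal "P \<inter> C" "R\<lparr>carrier := C\<rparr>" by (rule prime)
  show False using C.one_imp_carrier C.I_notcarr one C by simp
qed

lemma (in ring) prime_partial_ideal_orthogonal:
  assumes "prime_partial_ideal R P" and e: "e \<in> carrier R" and f: "f \<in> carrier R"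
    and ef: "e \<otimes> f = \<zero>" and fe: "f \<otimes> e = \<zero>"
  shows "e \<in> P \<or> f \<in> P"
proof -
  obtain C where C: "e \<in> C" "f \<in> C" and prime: "primeideal (P \<inter> C) (R\<lparr>carrier := C\<rparr>)"
    using prime_partial_ideal_commuting_pair[OF assms(1) e f] ef fe by metis
  interpret C: primeideal "P \<inter> C" "R\<lparr>carrier := C\<rparr>" by (rule prime)
  show ?thesis
    using C.I_prime[of e f] C ef additive_subgroup.zero_closed[OF C.is_additive_subgroup] by simp
qed

lemma (in ring) prime_partial_ideal_add:
  assumes "prime_partial_ideal R P" and e: "e \<in> carrier R" and f: "f \<in> carrier R"
    and "e \<otimes> f = f \<otimes> e" and "e \<in> P" and "f \<in> P"
  shows "e \<oplus> f \<in> P"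
proof -
  obtain C where C: "e \<in> C" "f \<in> C" and prime: "primeideal (P \<inter> C) (R\<lparr>carrier := C\<rparr>)"
    using prime_partial_ideal_commuting_pair[OF assms(1-4)] by metis
  interpret C: primeideal "P \<inter> C" "R\<lparr>carrier := C\<rparr>" by (rule prime)
  have "e \<oplus>\<^bsub>R\<lparr>carrier := C\<rparr>\<^esub> f \<in> P \<inter> C"
    using additive_subgroup.a_closed[OF C.is_additive_subgroup, of e f] C assms(5,6) by blast
  then show ?thesis by simp
qed

lemma (in ring) prime_partial_ideal_mult:
  assumes "prime_partial_ideal R P" and e: "e \<in> carrier R" and f: "f \<in> carrier R"
    and "e \<otimes> f = f \<otimes> e" and "f \<in> P"
  shows "e \<otimes> f \<in> P"
proof -
  obtain C where C: "e \<in> C" "f \<in> C" and prime: "primeideal (P \<inter> C) (R\<lparr>carrier := C\<rparr>)"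
    using prime_partial_ideal_commuting_pair[OF assms(1-4)] by metis
  interpret C: primeideal "P \<inter> C" "R\<lparr>carrier := C\<rparr>" by (rule prime)
  show ?thesis using C.I_l_closed[of f e] C assms(5) by simp
qed

section \<open>Points of a functor extending Spec\<close>

locale spec_point =
  fixes F :: "'u ring \<Rightarrow> 'x set"
    and Fm :: "'u ring \<Rightarrow> 'u ring \<Rightarrow> ('u \<Rightarrow> 'u) \<Rightarrow> 'x \<Rightarrow> 'x"
    and \<eta> :: "'u ring \<Rightarrow> 'x \<Rightarrow> 'u set"
    and A :: "'u ring" and x :: 'x
  assumes Fm_functor: "contra_ring_functor F Fm"
    and \<eta>_bij: "\<And>B. cring B \<Longrightarrow> bij_betw (\<eta> B) (F B) (Spec B)"
    and \<eta>_natural: "\<And>B C f. cring B \<Longrightarrow> cring C \<Longrightarrow> f \<in> ring_hom B C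
              \<Longrightarrow> \<forall>y\<in>F C. \<eta> B (Fm B C f y) = Spec_map B f (\<eta> C y)"
    and ring_A: "ring A"
    and point: "x \<in> F A"
begin

interpretation A: ring A by (rule ring_A)

definition point_prime :: "'u set \<Rightarrow> 'u set" where
  "point_prime C = \<eta> (A\<lparr>carrier := C\<rparr>) (Fm (A\<lparr>carrier := C\<rparr>) A id x)"

lemma subcring_inclusion_hom:
  assumes "subcring C A"
  shows "cring (A\<lparr>carrier := C\<rparr>)" and "id \<in> ring_hom (A\<lparr>carrier := C\<rparr>) A"
  using assms A.subcring_iff subcringE(1) subringE(1)[OF subcring.axioms(1)[OF assms]]
  by (auto intro!: ring_hom_memI)

lemma Fm_mem:
  "ring B \<Longrightarrow> ring C \<Longrightarrow> f \<in> ring_hom B C \<Longrightarrow> y \<in> F C \<Longrightarrow> Fm B C f y \<in> F B"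
  using Fm_functor unfolding contra_ring_functor_def by blast

lemma Fm_comp:
  "ring B \<Longrightarrow> ring C \<Longrightarrow> ring D \<Longrightarrow> f \<in> ring_hom B C \<Longrightarrow> g \<in> ring_hom C D \<Longrightarrow> z \<in> F D
    \<Longrightarrow> Fm B D (g \<circ> f) z = Fm B C f (Fm C D g z)"
  using Fm_functor unfolding contra_ring_functor_def by blast

lemma point_restriction_mem:
  assumes "subcring C A"
  shows "Fm (A\<lparr>carrier := C\<rparr>) A id x \<in> F (A\<lparr>carrier := C\<rparr>)"
  using Fm_mem[OF cring.axioms(1) ring_A _ point] subcring_inclusion_hom[OF assms] by blast

lemma point_prime_primeideal:
  assumes "subcring C A"
  shows "primeideal (point_prime C) (A\<lparr>carrier := C\<rparr>)"
  using point_restriction_mem[OF assms] \<eta>_bij[OF subcring_inclusion_hom(1)[OF assms]]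
  unfolding point_prime_def bij_betw_def Spec_def by blast

lemma point_prime_subset: "subcring C A \<Longrightarrow> point_prime C \<subseteq> C"
  using point_prime_primeideal primeideal.axioms(1) ideal.axioms(1) additive_subgroup.a_subset
  by fastforce

lemma point_prime_restrict:
  assumes S: "subcring S A" and T: "subcring T A" and "T \<subseteq> S"
  shows "point_prime T = point_prime S \<inter> T"
proof -
  let ?S = "A\<lparr>carrier := S\<rparr>" and ?T = "A\<lparr>carrier := T\<rparr>"
  have incl: "id \<in> ring_hom ?T ?S" using \<open>T \<subseteq> S\<close> by (auto intro!: ring_hom_memI)
  have "Fm ?T A (id \<circ> id) x = Fm ?T ?S id (Fm ?S A id x)"
    using Fm_comp[OF cring.axioms(1) cring.axioms(1) ring_A incl _ point]
      subcring_inclusion_hom[OF S] subcring_inclusion_hom[OF T] by blast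
  then have "point_prime T = \<eta> ?T (Fm ?T ?S id (Fm ?S A id x))"
    unfolding point_prime_def by simp
  also have "\<dots> = Spec_map ?T id (point_prime S)"
    using \<eta>_natural[OF subcring_inclusion_hom(1)[OF T] subcring_inclusion_hom(1)[OF S] incl]
      point_restriction_mem[OF S] unfolding point_prime_def by blast
  finally show ?thesis unfolding Spec_map_def by auto
qed

lemma prime_partial_ideal_point_primes:
  "prime_partial_ideal A (\<Union>{point_prime C | C. subcring C A})"
  unfolding prime_partial_ideal_def
proof (intro allI impI)
  fix C assume C: "subcring C A"
  have "(\<Union>{point_prime C' | C'. subcring C' A}) \<inter> C = point_prime C"
  proof (intro equalityI subsetI)
    fix e assume "e \<in> (\<Union>{point_prime C' | C'. subcring C' A}) \<inter> C"
    then obtain C' where C': "subcring C' A" "e \<in> point_prime C'" and "e \<in> C" by blast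
    let ?E = "generate_ring A {e}"
    have "e \<in> C'" using C' point_prime_subset by blast
    have eA: "e \<in> carrier A" using \<open>e \<in> C\<close> subcringE(1)[OF C] by blast
    have E: "subcring ?E A" using eA by (intro A.generate_ring_subcring) auto
    have E_sub: "?E \<subseteq> C" "?E \<subseteq> C'"
      using eA \<open>e \<in> C\<close> \<open>e \<in> C'\<close>
      by (simp_all add: A.generate_ring_min_subring1 subcring.axioms(1)[OF C] subcring.axioms(1)[OF C'(1)])
    \<comment> \<open>Both primes restrict to the same prime of the subring generated by e.\<close>
    have "e \<in> ?E" by (rule generate_ring.incl) simp
    then have "e \<in> point_prime ?E"
      using point_prime_restrict[OF C'(1) E E_sub(2)] C'(2) by blast
    then show "e \<in> point_prime C"
      using point_prime_restrict[OF C E E_sub(1)] by blast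
  next
    fix e assume "e \<in> point_prime C"
    then show "e \<in> (\<Union>{point_prime C' | C'. subcring C' A}) \<inter> C"
      using C point_prime_subset by blast
  qed
  then show "primeideal ((\<Union>{point_prime C' | C'. subcring C' A}) \<inter> C) (A\<lparr>carrier := C\<rparr>)"
    using point_prime_primeideal[OF C] by simp
qed

end

lemma point_imp_prime_partial_ideal:
  assumes "contra_ring_functor F Fm" and "restricts_to_Spec F Fm" and "ring A" and "x \<in> F A"
  obtains P where "prime_partial_ideal A P"
proof -
  obtain \<eta> where "spec_point F Fm \<eta> A x"
    using assms unfolding restricts_to_Spec_def spec_point_def by blast
  then show thesis by (rule that[OF spec_point.prime_partial_ideal_point_primes])
qed

section \<open>Complex matrices\<close>

lemma complex_ring_simps [simp]:
  "carrier complex_ring = UNIV" "monoid.mult complex_ring = (*)" "monoid.one complex_ring = 1"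
  "ring.zero complex_ring = 0" "ring.add complex_ring = (+)"
  by (simp_all add: complex_ring_def)

lemma cring_complex_ring: "cring complex_ring"
proof (rule cringI)
  show "abelian_group complex_ring"
    by (rule abelian_groupI) (auto simp: algebra_simps intro: exI[of _ "- _"])
  show "comm_monoid complex_ring"
    by (rule comm_monoidI) (auto simp: algebra_simps)
qed (auto simp: algebra_simps)

lemma ring_complex_ring: "ring complex_ring"
  using cring_complex_ring cring.axioms(1) by blast

lemma finsum_complex_ring: "finsum complex_ring f A = sum f A"
proof -
  interpret ring complex_ring by (rule ring_complex_ring)
  show ?thesis by (induct A rule: infinite_finite_induct) (auto simp: finsum_insert)
qed

definition mat_map :: "nat \<Rightarrow> ('b, 'n) ring_scheme \<Rightarrow> ('a \<Rightarrow> 'b) \<Rightarrow> (nat \<Rightarrow> nat \<Rightarrow> 'a) \<Rightarrow> nat \<Rightarrow> nat \<Rightarrow> 'b"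
  where "mat_map n R \<phi> M = (\<lambda>i j. if i < n \<and> j < n then \<phi> (M i j) else \<zero>\<^bsub>R\<^esub>)"

lemma mat_map_ring_hom:
  assumes S: "ring S" and R: "ring R" and \<phi>: "\<phi> \<in> ring_hom S R"
  shows "mat_map n R \<phi> \<in> ring_hom (mat_ring n S) (mat_ring n R)"
proof (rule ring_hom_memI)
  interpret \<phi>: ring_hom_ring S R \<phi> by (rule ring_hom_ringI2[OF S R \<phi>])
  fix M N assume M: "M \<in> carrier (mat_ring n S)" and N: "N \<in> carrier (mat_ring n S)"
  then have entries: "M i j \<in> carrier S" "N i j \<in> carrier S" if "i < n" "j < n" for i j
    using that by (auto simp: mat_ring_def)
  show "mat_map n R \<phi> M \<in> carrier (mat_ring n R)"
    using entries by (auto simp: mat_ring_def mat_map_def)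
  have "\<phi> (\<Oplus>\<^bsub>S\<^esub> k\<in>{..<n}. M i k \<otimes>\<^bsub>S\<^esub> N k j) = (\<Oplus>\<^bsub>R\<^esub> k\<in>{..<n}. \<phi> (M i k) \<otimes>\<^bsub>R\<^esub> \<phi> (N k j))"
    if "i < n" "j < n" for i j
    using that entries by (simp add: Pi_def comp_def) (intro \<phi>.S.finsum_cong'; simp)
  then show "mat_map n R \<phi> (M \<otimes>\<^bsub>mat_ring n S\<^esub> N) =
             mat_map n R \<phi> M \<otimes>\<^bsub>mat_ring n R\<^esub> mat_map n R \<phi> N"
    using entries by (intro ext) (auto simp: mat_ring_def mat_map_def intro!: \<phi>.S.finsum_cong')
  show "mat_map n R \<phi> (M \<oplus>\<^bsub>mat_ring n S\<^esub> N) =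
        mat_map n R \<phi> M \<oplus>\<^bsub>mat_ring n R\<^esub> mat_map n R \<phi> N"
    using entries by (intro ext) (auto simp: mat_ring_def mat_map_def)
next
  show "mat_map n R \<phi> \<one>\<^bsub>mat_ring n S\<^esub> = \<one>\<^bsub>mat_ring n R\<^esub>"
    using ring_hom_one[OF \<phi>] ring_hom_zero[OF \<phi> S R] by (intro ext) (auto simp: mat_ring_def mat_map_def)
qed

abbreviation cmat :: "nat \<Rightarrow> (nat \<Rightarrow> nat \<Rightarrow> complex) ring" where
  "cmat n \<equiv> mat_ring n complex_ring"

lemma cmat_simps:
  "M \<in> carrier (cmat n) \<longleftrightarrow> (\<forall>i j. \<not> (i < n \<and> j < n) \<longrightarrow> M i j = 0)"
  "M \<otimes>\<^bsub>cmat n\<^esub> N = (\<lambda>i j. if i < n \<and> j < n then \<Sum>k<n. M i k * N k j else 0)"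
  "M \<oplus>\<^bsub>cmat n\<^esub> N = (\<lambda>i j. if i < n \<and> j < n then M i j + N i j else 0)"
  "\<one>\<^bsub>cmat n\<^esub> = (\<lambda>i j. if i < n \<and> j = i then 1 else 0)"
  "\<zero>\<^bsub>cmat n\<^esub> = (\<lambda>i j. 0)"
  by (simp_all add: mat_ring_def finsum_complex_ring cong: if_cong)

lemma cmat_add_closed: "M \<oplus>\<^bsub>cmat n\<^esub> N \<in> carrier (cmat n)"
  by (simp add: cmat_simps)

definition diag_mat :: "nat \<Rightarrow> nat set \<Rightarrow> nat \<Rightarrow> nat \<Rightarrow> complex" where
  "diag_mat n S = (\<lambda>i j. if i = j \<and> i \<in> S \<and> i < n then 1 else 0)"

lemma diag_mat_carrier: "diag_mat n S \<in> carrier (cmat n)"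
  by (simp add: cmat_simps diag_mat_def)

lemma diag_mat_mult: "diag_mat n S \<otimes>\<^bsub>cmat n\<^esub> diag_mat n T = diag_mat n (S \<inter> T)"
proof (intro ext)
  fix i j
  have "(\<Sum>k<n. diag_mat n S i k * diag_mat n T k j) =
        (\<Sum>k<n. if k = i then (if i = j \<and> i \<in> S \<inter> T then 1 else 0) else 0)"
    by (intro sum.cong) (auto simp: diag_mat_def)
  then show "(diag_mat n S \<otimes>\<^bsub>cmat n\<^esub> diag_mat n T) i j = diag_mat n (S \<inter> T) i j"
    by (auto simp: cmat_simps diag_mat_def)
qed

lemma diag_mat_add: "S \<inter> T = {} \<Longrightarrow> diag_mat n S \<oplus>\<^bsub>cmat n\<^esub> diag_mat n T = diag_mat n (S \<union> T)"
  by (intro ext) (auto simp: cmat_simps diag_mat_def)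

lemma diag_mat_lessThan: "diag_mat n {..<n} = \<one>\<^bsub>cmat n\<^esub>"
  by (intro ext) (auto simp: cmat_simps diag_mat_def)

type_synonym vec3 = "int \<times> int \<times> int"

definition coord :: "vec3 \<Rightarrow> nat \<Rightarrow> complex" where
  "coord v p = of_int (if p = 0 then fst v else if p = 1 then fst (snd v) else snd (snd v))"

definition dot3 :: "vec3 \<Rightarrow> vec3 \<Rightarrow> int" where
  "dot3 u v = fst u * fst v + fst (snd u) * fst (snd v) + snd (snd u) * snd (snd v)"

lemma dot3_commute: "dot3 u v = dot3 v u"
  by (simp add: dot3_def mult.commute)

definition slot :: "nat \<Rightarrow> nat \<Rightarrow> nat \<Rightarrow> nat \<Rightarrow> nat" where
  "slot a b c i = (if i = a then 0 else if i = b then 1 else 2)"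

definition embed3 :: "nat \<Rightarrow> nat \<Rightarrow> nat \<Rightarrow> vec3 \<Rightarrow> nat \<Rightarrow> complex" where
  "embed3 a b c v i = (if i \<in> {a, b, c} then coord v (slot a b c i) else 0)"

definition line_proj :: "nat \<Rightarrow> nat \<Rightarrow> nat \<Rightarrow> vec3 \<Rightarrow> nat \<Rightarrow> nat \<Rightarrow> complex" where
  "line_proj a b c v = (\<lambda>i j. embed3 a b c v i * embed3 a b c v j / of_int (dot3 v v))"

definition decomposes_identity :: "vec3 \<Rightarrow> vec3 \<Rightarrow> vec3 \<Rightarrow> bool" where
  "decomposes_identity u v w \<longleftrightarrow> (\<forall>p\<in>{0, 1, 2}. \<forall>q\<in>{0, 1, 2}.
     coord u p * coord u q / of_int (dot3 u u) + coord v p * coord v q / of_int (dot3 v v)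
       + coord w p * coord w q / of_int (dot3 w w) = (if p = q then 1 else 0))"

context
  fixes n a b c :: nat
  assumes abc: "a < n" "b < n" "c < n" "a \<noteq> b" "a \<noteq> c" "b \<noteq> c"
begin

lemma line_proj_carrier: "line_proj a b c v \<in> carrier (cmat n)"
  using abc by (auto simp: cmat_simps line_proj_def embed3_def)

lemma sum_embed3: "(\<Sum>k<n. embed3 a b c u k * embed3 a b c v k) = of_int (dot3 u v)"
proof -
  have "(\<Sum>k<n. embed3 a b c u k * embed3 a b c v k) = (\<Sum>k\<in>{a, b, c}. embed3 a b c u k * embed3 a b c v k)"
    using abc by (intro sum.mono_neutral_right) (auto simp: embed3_def)
  also have "\<dots> = of_int (dot3 u v)"
    using abc by (simp add: embed3_def slot_def coord_def dot3_def)
  finally show ?thesis .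
qed

lemma line_proj_orthogonal:
  assumes "dot3 u v = 0"
  shows "line_proj a b c u \<otimes>\<^bsub>cmat n\<^esub> line_proj a b c v = \<zero>\<^bsub>cmat n\<^esub>"
proof (intro ext)
  fix i j
  have "(\<Sum>k<n. line_proj a b c u i k * line_proj a b c v k j) =
        embed3 a b c u i * embed3 a b c v j / (of_int (dot3 u u) * of_int (dot3 v v))
          * (\<Sum>k<n. embed3 a b c u k * embed3 a b c v k)"
    unfolding line_proj_def sum_distrib_left by (intro sum.cong) (auto simp: field_simps)
  then show "(line_proj a b c u \<otimes>\<^bsub>cmat n\<^esub> line_proj a b c v) i j = \<zero>\<^bsub>cmat n\<^esub> i j"
    using assms by (simp add: cmat_simps sum_embed3)
qed

lemma line_proj_decomposition:
  assumes "decomposes_identity u v w"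
  shows "(line_proj a b c u \<oplus>\<^bsub>cmat n\<^esub> line_proj a b c v) \<oplus>\<^bsub>cmat n\<^esub> line_proj a b c w
         = diag_mat n {a, b, c}"
proof (intro ext)
  fix i j
  show "((line_proj a b c u \<oplus>\<^bsub>cmat n\<^esub> line_proj a b c v) \<oplus>\<^bsub>cmat n\<^esub> line_proj a b c w) i j
        = diag_mat n {a, b, c} i j"
  proof (cases "i \<in> {a, b, c} \<and> j \<in> {a, b, c}")
    case True
    have "slot a b c i \<in> {0, 1, 2}" "slot a b c j \<in> {0, 1, 2}" by (auto simp: slot_def)
    moreover have "slot a b c i = slot a b c j \<longleftrightarrow> i = j" using True abc by (auto simp: slot_def)
    ultimately show ?thesis
      using assms True abc unfolding decomposes_identity_def
      by (auto simp: cmat_simps diag_mat_def line_proj_def embed3_def)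
  next
    case False
    then show ?thesis by (auto simp: cmat_simps diag_mat_def line_proj_def embed3_def)
  qed
qed

end

section \<open>A Kochen--Specker set of rays\<close>

definition ks_vectors :: "vec3 list" where
  "ks_vectors =
   [(0, 0, 1), (0, 1, -1), (0, 1, 0), (0, 1, 1), (1, -2, -1), (1, -2, 0),
    (1, -2, 1), (1, -1, -2), (1, -1, -1), (1, -1, 0), (1, -1, 1), (1, -1, 2),
    (1, 0, -2), (1, 0, -1), (1, 0, 0), (1, 0, 1), (1, 0, 2), (1, 1, -2),
    (1, 1, -1), (1, 1, 0), (1, 1, 1), (1, 1, 2), (1, 2, -1), (1, 2, 0),
    (1, 2, 1), (2, -1, -1), (2, -1, 0), (2, -1, 1), (2, 0, -1), (2, 0, 1),
    (2, 1, -1), (2, 1, 0), (2, 1, 1)]"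

definition ks_triples :: "(vec3 \<times> vec3 \<times> vec3) list" where
  "ks_triples =
   [((0, 0, 1), (0, 1, 0), (1, 0, 0)),
    ((0, 0, 1), (1, -2, 0), (2, 1, 0)),
    ((0, 0, 1), (1, -1, 0), (1, 1, 0)),
    ((0, 0, 1), (1, 2, 0), (2, -1, 0)),
    ((0, 1, -1), (0, 1, 1), (1, 0, 0)),
    ((0, 1, -1), (1, -1, -1), (2, 1, 1)),
    ((0, 1, -1), (1, 1, 1), (2, -1, -1)),
    ((0, 1, 0), (1, 0, -2), (2, 0, 1)),
    ((0, 1, 0), (1, 0, -1), (1, 0, 1)),
    ((0, 1, 0), (1, 0, 2), (2, 0, -1)),
    ((0, 1, 1), (1, -1, 1), (2, 1, -1)),
    ((0, 1, 1), (1, 1, -1), (2, -1, 1)),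
    ((1, -2, -1), (1, 0, 1), (1, 1, -1)),
    ((1, -2, 1), (1, 0, -1), (1, 1, 1)),
    ((1, -1, -2), (1, -1, 1), (1, 1, 0)),
    ((1, -1, -1), (1, -1, 2), (1, 1, 0)),
    ((1, -1, -1), (1, 0, 1), (1, 2, -1)),
    ((1, -1, 0), (1, 1, -2), (1, 1, 1)),
    ((1, -1, 0), (1, 1, -1), (1, 1, 2)),
    ((1, -1, 1), (1, 0, -1), (1, 2, 1))]"

lemma ks_triples_frames:
  assumes "(u, v, w) \<in> set ks_triples"
  shows "dot3 u v = 0 \<and> dot3 u w = 0 \<and> dot3 v w = 0 \<and> decomposes_identity u v w"
  using assms by (auto simp: ks_triples_def dot3_def decomposes_identity_def coord_def)

text \<open>Read p v as ``the projection onto the line of v lies in the ideal''.\<close>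
lemma kochen_specker:
  fixes p :: "vec3 \<Rightarrow> bool"
  assumes "\<And>u v. u \<in> set ks_vectors \<Longrightarrow> v \<in> set ks_vectors \<Longrightarrow> dot3 u v = 0 \<Longrightarrow> p u \<or> p v"
    and "\<And>u v w. (u, v, w) \<in> set ks_triples \<Longrightarrow> \<not> (p u \<and> p v \<and> p w)"
  shows False
proof -
  have "\<forall>u\<in>set ks_vectors. \<forall>v\<in>set ks_vectors. dot3 u v = 0 \<longrightarrow> p u \<or> p v"
    and "\<forall>(u, v, w)\<in>set ks_triples. \<not> (p u \<and> p v \<and> p w)"
    using assms by blast+
  then show False
    unfolding ks_vectors_def ks_triples_def by (simp add: dot3_def) sat
qed

section \<open>Prime partial ideals receiving complex matrices\<close>

locale cmat_partial_ideal =
  fixes A :: "('a, 'm) ring_scheme" and n :: nat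
    and \<psi> :: "(nat \<Rightarrow> nat \<Rightarrow> complex) \<Rightarrow> 'a" and P :: "'a set"
  assumes ring_A: "ring A"
    and \<psi>_hom: "\<psi> \<in> ring_hom (cmat n) A"
    and partial_ideal: "prime_partial_ideal A P"
begin

interpretation A: ring A by (rule ring_A)

lemma \<psi>_closed: "M \<in> carrier (cmat n) \<Longrightarrow> \<psi> M \<in> carrier A"
  by (rule ring_hom_closed[OF \<psi>_hom])

text \<open>Not an instance of ring_hom_zero, which would need cmat n to be a ring.\<close>
lemma \<psi>_zero: "\<psi> \<zero>\<^bsub>cmat n\<^esub> = \<zero>\<^bsub>A\<^esub>"
proof -
  have zero: "\<zero>\<^bsub>cmat n\<^esub> \<in> carrier (cmat n)" "\<zero>\<^bsub>cmat n\<^esub> \<oplus>\<^bsub>cmat n\<^esub> \<zero>\<^bsub>cmat n\<^esub> = \<zero>\<^bsub>cmat n\<^esub>"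
    by (simp_all add: cmat_simps cong: if_cong)
  then have "\<psi> \<zero>\<^bsub>cmat n\<^esub> \<oplus>\<^bsub>A\<^esub> \<psi> \<zero>\<^bsub>cmat n\<^esub> = \<psi> \<zero>\<^bsub>cmat n\<^esub> \<oplus>\<^bsub>A\<^esub> \<zero>\<^bsub>A\<^esub>"
    using ring_hom_add[OF \<psi>_hom] \<psi>_closed A.r_zero by metis
  then show ?thesis using \<psi>_closed[OF zero(1)] A.add.l_cancel by blast
qed

lemma \<psi>_orthogonal_disj:
  assumes "M \<in> carrier (cmat n)" "N \<in> carrier (cmat n)"
    and "M \<otimes>\<^bsub>cmat n\<^esub> N = \<zero>\<^bsub>cmat n\<^esub>" "N \<otimes>\<^bsub>cmat n\<^esub> M = \<zero>\<^bsub>cmat n\<^esub>"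
  shows "\<psi> M \<in> P \<or> \<psi> N \<in> P"
  using assms by (intro A.prime_partial_ideal_orthogonal[OF partial_ideal])
    (auto simp: \<psi>_closed \<psi>_zero ring_hom_mult[OF \<psi>_hom, symmetric])

lemma diag_unit_notin:
  assumes "0 < n"
  shows "\<exists>k<n. \<psi> (diag_mat n {k}) \<notin> P"
proof (rule ccontr)
  assume "\<not> ?thesis"
  then have units: "\<psi> (diag_mat n {k}) \<in> P" if "k < n" for k using that by blast
  have "\<psi> (diag_mat n S) \<in> P" if "finite S" "S \<noteq> {}" "S \<subseteq> {..<n}" for S
    using that
  proof (induction S rule: finite_ne_induct)
    case (singleton k)
    then show ?case using units by simp
  next
    case (insert k S)
    have "diag_mat n (insert k S) = diag_mat n {k} \<oplus>\<^bsub>cmat n\<^esub> diag_mat n S"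
      using insert.hyps by (simp add: diag_mat_add)
    moreover have "\<psi> (diag_mat n {k}) \<otimes>\<^bsub>A\<^esub> \<psi> (diag_mat n S) = \<psi> (diag_mat n S) \<otimes>\<^bsub>A\<^esub> \<psi> (diag_mat n {k})"
      by (simp add: ring_hom_mult[OF \<psi>_hom, symmetric] diag_mat_carrier diag_mat_mult Int_commute)
    ultimately show ?case
      using A.prime_partial_ideal_add[OF partial_ideal] insert units
      by (simp add: ring_hom_add[OF \<psi>_hom] diag_mat_carrier \<psi>_closed)
  qed
  from this[of "{..<n}"] have "\<one>\<^bsub>A\<^esub> \<in> P"
    using assms ring_hom_one[OF \<psi>_hom] by (auto simp: diag_mat_lessThan)
  then show False using A.one_notin_prime_partial_ideal[OF partial_ideal] by blast
qed

lemma diag_mat_notin: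
  assumes "k \<in> S" and "\<psi> (diag_mat n {k}) \<notin> P"
  shows "\<psi> (diag_mat n S) \<notin> P"
proof
  assume "\<psi> (diag_mat n S) \<in> P"
  moreover have "\<psi> (diag_mat n {k}) = \<psi> (diag_mat n {k}) \<otimes>\<^bsub>A\<^esub> \<psi> (diag_mat n S)"
    and "\<psi> (diag_mat n {k}) \<otimes>\<^bsub>A\<^esub> \<psi> (diag_mat n S) = \<psi> (diag_mat n S) \<otimes>\<^bsub>A\<^esub> \<psi> (diag_mat n {k})"
    using assms(1) by (simp_all add: ring_hom_mult[OF \<psi>_hom, symmetric] diag_mat_carrier diag_mat_mult Int_commute)
  ultimately show False
    using A.prime_partial_ideal_mult[OF partial_ideal] assms(2) by (metis \<psi>_closed diag_mat_carrier)
qed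

lemma line_projs_not_all_in:
  assumes abc: "a < n" "b < n" "c < n" "a \<noteq> b" "a \<noteq> c" "b \<noteq> c"
    and diag: "\<psi> (diag_mat n {a, b, c}) \<notin> P" and uvw: "(u, v, w) \<in> set ks_triples"
  shows "\<not> (\<psi> (line_proj a b c u) \<in> P \<and> \<psi> (line_proj a b c v) \<in> P \<and> \<psi> (line_proj a b c w) \<in> P)"
proof
  let ?e = "\<lambda>v. \<psi> (line_proj a b c v)"
  have carrier: "?e x \<in> carrier A" for x by (rule \<psi>_closed[OF line_proj_carrier[OF abc]])
  have orth: "?e x \<otimes>\<^bsub>A\<^esub> ?e y = \<zero>\<^bsub>A\<^esub>" if "dot3 x y = 0" for x y
    using that by (simp add: ring_hom_mult[OF \<psi>_hom, symmetric] line_proj_carrier[OF abc]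
        line_proj_orthogonal[OF abc] \<psi>_zero)
  have frame: "dot3 u v = 0" "dot3 v u = 0" "dot3 u w = 0" "dot3 w u = 0" "dot3 v w = 0" "dot3 w v = 0"
    and decomp: "decomposes_identity u v w"
    using ks_triples_frames[OF uvw] dot3_commute by metis+
  assume "?e u \<in> P \<and> ?e v \<in> P \<and> ?e w \<in> P"
  then have "?e u \<oplus>\<^bsub>A\<^esub> ?e v \<in> P" and "?e w \<in> P"
    using A.prime_partial_ideal_add[OF partial_ideal carrier carrier] orth frame by auto
  moreover have "(?e u \<oplus>\<^bsub>A\<^esub> ?e v) \<otimes>\<^bsub>A\<^esub> ?e w = ?e w \<otimes>\<^bsub>A\<^esub> (?e u \<oplus>\<^bsub>A\<^esub> ?e v)"
    using orth frame carrier by (simp add: A.l_distr A.r_distr)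
  ultimately have "(?e u \<oplus>\<^bsub>A\<^esub> ?e v) \<oplus>\<^bsub>A\<^esub> ?e w \<in> P"
    using A.prime_partial_ideal_add[OF partial_ideal] carrier by blast
  also have "(?e u \<oplus>\<^bsub>A\<^esub> ?e v) \<oplus>\<^bsub>A\<^esub> ?e w = \<psi> (diag_mat n {a, b, c})"
    by (simp add: line_proj_decomposition[OF abc decomp, symmetric] ring_hom_add[OF \<psi>_hom]
        line_proj_carrier[OF abc] cmat_add_closed)
  finally show False using diag by contradiction
qed

lemma dim_less_3: "n < 3"
proof (rule ccontr)
  assume "\<not> n < 3"
  then have n3: "3 \<le> n" by simp
  obtain k where "k < n" and k: "\<psi> (diag_mat n {k}) \<notin> P"
    using diag_unit_notin n3 by auto
  let ?c = "max 2 k"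
  have abc: "0 < n" "1 < n" "?c < n" "0 \<noteq> (1::nat)" "0 \<noteq> ?c" "1 \<noteq> ?c"
    and k_mem: "k \<in> {0, 1, ?c}"
    using n3 \<open>k < n\<close> by auto
  have diag: "\<psi> (diag_mat n {0, 1, ?c}) \<notin> P" by (rule diag_mat_notin[OF k_mem k])
  show False
  proof (rule kochen_specker[of "\<lambda>v. \<psi> (line_proj 0 1 ?c v) \<in> P"])
    fix u v assume "dot3 u v = 0"
    then have "dot3 v u = 0" by (simp add: dot3_commute)
    with \<open>dot3 u v = 0\<close> show "\<psi> (line_proj 0 1 ?c u) \<in> P \<or> \<psi> (line_proj 0 1 ?c v) \<in> P"
      by (intro \<psi>_orthogonal_disj line_proj_carrier[OF abc] line_proj_orthogonal[OF abc])
  next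
    fix u v w assume "(u, v, w) \<in> set ks_triples"
    then show "\<not> (\<psi> (line_proj 0 1 ?c u) \<in> P \<and> \<psi> (line_proj 0 1 ?c v) \<in> P \<and> \<psi> (line_proj 0 1 ?c w) \<in> P)"
      by (rule line_projs_not_all_in[OF abc diag])
  qed
qed

end

theorem corollary4p1:
  fixes F :: "'u ring \<Rightarrow> 'x set"
    and Fm :: "'u ring \<Rightarrow> 'u ring \<Rightarrow> ('u \<Rightarrow> 'u) \<Rightarrow> 'x \<Rightarrow> 'x"
    and R :: "'r ring"
    and A :: "'u ring"
    and n :: nat
  assumes "contra_ring_functor F Fm"
    and "restricts_to_Spec F Fm"
    and "ring R"
    and "ring_hom complex_ring R \<noteq> {}"
    and "n \<ge> 3"
    and "ring A"
    and "A \<simeq> mat_ring n R"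
  shows "F A = {}"
proof (rule ccontr)
  assume "F A \<noteq> {}"
  then obtain x where "x \<in> F A" by blast
  then obtain P where P: "prime_partial_ideal A P"
    using point_imp_prime_partial_ideal assms(1,2,6) by metis
  obtain \<phi> where \<phi>: "\<phi> \<in> ring_hom complex_ring R" using assms(4) by blast
  obtain g where g: "g \<in> ring_hom (mat_ring n R) A"
    using ring_iso_sym[OF assms(6,7)] by (auto simp: is_ring_iso_def ring_iso_def)
  have "g \<circ> mat_map n R \<phi> \<in> ring_hom (cmat n) A"
    using mat_map_ring_hom[OF ring_complex_ring assms(3) \<phi>] g by (rule ring_hom_trans)
  then have "cmat_partial_ideal A n (g \<circ> mat_map n R \<phi>) P"
    using assms(6) P by (simp add: cmat_partial_ideal_def)
  then show False using cmat_partial_ideal.dim_less_3 assms(5) by fastforce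
qed

end
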